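(* Let $\mathcal{P}_G$ be the set of $n$-armed bandit models whose arms are Gaussian $\mathcal{N}(\mu_i,\sigma^2)$ with $\mu_i\in[0,1]$. Let $A$ be a $T$-round algorithm that is $(\epsilon,\delta)$-PAC on $\mathcal{P}_G$ with $\delta\le1/6$. Let $c=\frac23\log\frac{1}{2\delta}$ and $\hat\Delta_i(\nu)=(\Delta_i(\nu)+\epsilon)/\sigma$. Let $\nu\in\mathcal{P}_G$ satisfy $\mu_{[1]}\le1-\epsilon$ and $\Delta_{[1]}\ge\epsilon$. Then for every $i\in[n]\setminus\{[1]\}$, $$\mathbb{P}_{A,\nu}\big(\widetilde N_{i,T}\ge c\,\hat\Delta_i(\nu)^{-2}\big)\ge\frac16.$$
   Context: Arm $[j]$ has the $j$-th highest mean; $\Delta_i=\mu_{[1]}-\mu_i$ ($i\ne[1]$), $\Delta_{[1]}=\mu_{[1]}-\mu_{[2]}$. A $T$-round algorithm chooses at each round $t$ integers $N_{i,t}\ge0$ measurably in past actions/observations, observes $N_{i,t}$ fresh i.i.d. samples from each arm, and outputs $\hat I\in[n]$ after round $T$; $\widetilde N_{i,T}=\sum_{t\le T}N_{i,t}$. It is $(\epsilon,\delta)$-PAC on a class if for every $\nu$ in the class, $\mathbb{P}_{A,\nu}(\mu_{\hat I}>\mu_{[1]}-\epsilon)\ge1-\delta$. *)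

theory Defs
  imports "HOL-Probability.Probability"
begin

type_synonym sample_table = "nat \<Rightarrow> nat \<Rightarrow> real"
  (* X i k = k-th fresh sample of arm i (arms 0..n-1) *)

type_synonym allocation = "nat \<Rightarrow> sample_table \<Rightarrow> nat \<Rightarrow> nat"
  (* alloc t X i = N_{i,t+1}: samples of arm i requested in round t+1 (rounds 0..T-1) *)

text \<open>Gaussian bandit model with means mu i and common standard deviation sigma:
  an infinite i.i.d. table of samples for every arm (stack-of-rewards model).\<close>
definition gauss_bandit :: "real \<Rightarrow> (nat \<Rightarrow> real) \<Rightarrow> sample_table measure" where
  "gauss_bandit \<sigma> \<mu> =
     (\<Pi>\<^sub>M i\<in>UNIV. \<Pi>\<^sub>M k\<in>UNIV. density lborel (normal_density (\<mu> i) \<sigma>))"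

definition table_space :: "sample_table measure" where
  "table_space = (\<Pi>\<^sub>M i\<in>UNIV. \<Pi>\<^sub>M k\<in>UNIV. (borel :: real measure))"

fun cumN :: "allocation \<Rightarrow> nat \<Rightarrow> sample_table \<Rightarrow> nat \<Rightarrow> nat" where
  "cumN A 0 X i = 0"
| "cumN A (Suc t) X i = cumN A t X i + A t X i"

text \<open>A T-round algorithm on n arms: each round's allocation is a measurable function of
  the samples observed so far only; the output is a measurable function of all samples
  observed in the T rounds and lies in the arm set.\<close>
definition batched_alg ::
  "nat \<Rightarrow> nat \<Rightarrow> allocation \<Rightarrow> (sample_table \<Rightarrow> nat) \<Rightarrow> bool" where
  "batched_alg n T A out \<longleftrightarrow>
     (\<forall>t<T. \<forall>i. (\<lambda>X. A t X i) \<in> measurable table_space (count_space UNIV)) \<and>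
     (\<forall>t<T. \<forall>X i. n \<le> i \<longrightarrow> A t X i = 0) \<and>
     (\<forall>t<T. \<forall>X Y. (\<forall>i k. k < cumN A t X i \<longrightarrow> X i k = Y i k) \<longrightarrow> A t X = A t Y) \<and>
     out \<in> measurable table_space (count_space UNIV) \<and>
     (\<forall>X. out X < n) \<and>
     (\<forall>X Y. (\<forall>i k. k < cumN A T X i \<longrightarrow> X i k = Y i k) \<longrightarrow> out X = out Y)"

definition mu_top :: "nat \<Rightarrow> (nat \<Rightarrow> real) \<Rightarrow> real" where
  "mu_top n \<mu> = Max (\<mu> ` {..<n})"

definition best_arm :: "nat \<Rightarrow> (nat \<Rightarrow> real) \<Rightarrow> nat" where
  "best_arm n \<mu> = (SOME j. j < n \<and> (\<forall>k<n. \<mu> k \<le> \<mu> j))"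

definition gap :: "nat \<Rightarrow> (nat \<Rightarrow> real) \<Rightarrow> nat \<Rightarrow> real" where
  "gap n \<mu> i = (if i = best_arm n \<mu>
      then mu_top n \<mu> - Max (\<mu> ` ({..<n} - {best_arm n \<mu>}))
      else mu_top n \<mu> - \<mu> i)"

definition PAC_gauss ::
  "nat \<Rightarrow> real \<Rightarrow> real \<Rightarrow> real \<Rightarrow> allocation \<Rightarrow> (sample_table \<Rightarrow> nat) \<Rightarrow> bool" where
  "PAC_gauss n \<sigma> \<epsilon> \<delta> A out \<longleftrightarrow>
     (\<forall>\<mu>. (\<forall>i<n. \<mu> i \<in> {0..1}) \<longrightarrow>
        measure (gauss_bandit \<sigma> \<mu>)
          {X \<in> space (gauss_bandit \<sigma> \<mu>). \<mu> (out X) > mu_top n \<mu> - \<epsilon>} \<ge> 1 - \<delta>)"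

end

(*
  Change of measure.  Let d = mu_top - \<mu> i + \<epsilon> and let \<nu>' be the model \<nu> with the
  mean of arm i raised by d to mu_top + \<epsilon>; it still lies in the Gaussian class,
  and there i is the only \<epsilon>-good arm.  Let K be the largest integer below
  c \<sigma>^2 / d^2 and E the event "arm i is sampled at most K times and the output is
  not i".  Whether E occurs depends on the first K samples of arm i only, so
  shifting all later samples of arm i by d leaves E invariant, and
  \<nu>'(E) = E_\<nu>[1_E exp (Z - v/2)], where exp (Z - v/2) is the likelihood ratio of
  those K samples, Z ~ N(0, v) and v = K d^2 / \<sigma>^2 \<le> c.  Bounding exp from below
  by a tangent line and using only E Z = 0 and E Z^2 = v gives
  \<nu>'(E) \<ge> e^a (\<nu>(E) (1 - a - v/2) - v/(4q) - q/4) for all a and q > 0; a suitable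
  choice of a and q shows that \<nu>(E) > 2/3 would force \<nu>'(E) > \<delta>, contradicting
  PAC on \<nu>'.  Since PAC on \<nu> also gives \<nu>(out = i) \<le> \<delta> \<le> 1/6, arm i is
  sampled more than K times with probability at least 1/6.
*)

theory Submission
  imports Defs
begin

section \<open>Products of probability spaces\<close>

lemma measurable_PiM_map:
  assumes "\<And>i. f i \<in> M i \<rightarrow>\<^sub>M N i"
  shows "(\<lambda>x i. f i (x i)) \<in> PiM UNIV M \<rightarrow>\<^sub>M PiM UNIV N"
  using measurable_restrict[of UNIV "\<lambda>i x. f i (x i)" "PiM UNIV M" N] assms
  by (simp add: restrict_UNIV)

lemma distr_PiM_map:
  assumes P: "\<And>i. prob_space (M i)" and f: "\<And>i. f i \<in> M i \<rightarrow>\<^sub>M N i"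
  shows "distr (PiM UNIV M) (PiM UNIV N) (\<lambda>x i. f i (x i)) = PiM UNIV (\<lambda>i. distr (M i) (N i) (f i))"
proof -
  interpret D: product_prob_space "\<lambda>i. distr (M i) (N i) (f i)" UNIV
    by (intro product_prob_spaceI prob_space.prob_space_distr P f)
  show ?thesis
  proof (rule D.PiM_eq)
    show "sets (distr (PiM UNIV M) (PiM UNIV N) (\<lambda>x i. f i (x i))) = sets (PiM UNIV (\<lambda>i. distr (M i) (N i) (f i)))"
      by (simp cong: sets_PiM_cong)
    fix J F assume J: "finite J" and F: "\<And>j. j \<in> J \<Longrightarrow> F j \<in> sets (distr (M j) (N j) (f j))"
    have FN: "F j \<in> sets (N j)" if "j \<in> J" for j
      using F[OF that] by simp
    have emb: "prod_emb UNIV (\<lambda>i. distr (M i) (N i) (f i)) J (Pi\<^sub>E J F) = prod_emb UNIV N J (Pi\<^sub>E J F)"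
      by (simp add: prod_emb_def space_PiM)
    have "(\<lambda>x i. f i (x i)) -` prod_emb UNIV N J (Pi\<^sub>E J F) \<inter> space (PiM UNIV M)
        = prod_emb UNIV M J (Pi\<^sub>E J (\<lambda>j. f j -` F j \<inter> space (M j)))"
      using f[THEN measurable_space] by (auto simp: prod_emb_def space_PiM PiE_iff)
    moreover have "prod_emb UNIV N J (Pi\<^sub>E J F) \<in> sets (PiM UNIV N)"
      using J FN by (intro sets_PiM_I) auto
    ultimately show "emeasure (distr (PiM UNIV M) (PiM UNIV N) (\<lambda>x i. f i (x i))) (prod_emb UNIV (\<lambda>i. distr (M i) (N i) (f i)) J (Pi\<^sub>E J F))
        = (\<Prod>j\<in>J. emeasure (distr (M j) (N j) (f j)) (F j))"
      using J FN f by (simp add: emb emeasure_distr measurable_PiM_map emeasure_PiM_emb P measurable_sets)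
  qed
qed

lemma (in product_prob_space) nn_integral_prod_components:
  assumes J: "finite J" "J \<subseteq> I" and f: "\<And>j. j \<in> J \<Longrightarrow> f j \<in> borel_measurable (M j)"
  shows "(\<integral>\<^sup>+x. (\<Prod>j\<in>J. f j (x j)) \<partial>PiM I M) = (\<Prod>j\<in>J. integral\<^sup>N (M j) (f j))"
proof -
  have fJ: "(\<lambda>x. \<Prod>j\<in>J. f j (x j)) \<in> borel_measurable (PiM J M)"
    using f by measurable
  have "(\<integral>\<^sup>+x. (\<Prod>j\<in>J. f j (x j)) \<partial>PiM I M) = (\<integral>\<^sup>+x. (\<Prod>j\<in>J. f j (x j)) \<partial>distr (PiM I M) (PiM J M) (\<lambda>x. restrict x J))"
    using J fJ by (subst nn_integral_distr) (auto intro!: measurable_restrict_subset nn_integral_cong prod.cong)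
  also have "\<dots> = (\<Prod>j\<in>J. integral\<^sup>N (M j) (f j))"
    using J f by (simp add: distr_PiM_restrict_finite product_nn_integral_prod)
  finally show ?thesis .
qed

lemma indicator_prod_emb:
  fixes F :: "'i \<Rightarrow> 'a set"
  assumes K: "finite K" and x: "x \<in> space (PiM I M)"
  shows "indicator (prod_emb I M K (Pi\<^sub>E K F)) x = (\<Prod>j\<in>K. indicator (F j) (x j) :: 'b :: comm_semiring_1)"
proof (cases "\<forall>j\<in>K. x j \<in> F j")
  case True
  then show ?thesis using x by (simp add: prod_emb_def space_PiM PiE_iff indicator_def)
next
  case False
  then obtain j where j: "j \<in> K" "x j \<notin> F j" by auto
  then have "(\<Prod>j\<in>K. indicator (F j) (x j) :: 'b) = 0"
    using K by (intro prod_zero) (auto intro!: bexI[of _ j])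
  then show ?thesis using False by (auto simp: prod_emb_def indicator_def)
qed

lemma (in product_prob_space) emeasure_density_prod_emb:
  assumes J: "finite J" "J \<subseteq> I" and K: "finite K" "K \<subseteq> I"
    and g: "\<And>j. j \<in> J \<Longrightarrow> g j \<in> borel_measurable (M j)" and F: "\<And>j. j \<in> K \<Longrightarrow> F j \<in> sets (M j)"
  shows "emeasure (density (PiM I M) (\<lambda>x. \<Prod>j\<in>J. g j (x j))) (prod_emb I M K (Pi\<^sub>E K F))
    = (\<Prod>j\<in>J \<union> K. \<integral>\<^sup>+y. (if j \<in> J then g j y else 1) * (if j \<in> K then indicator (F j) y else 1) \<partial>M j)"
proof -
  define h where "h j y = (if j \<in> J then g j y else 1) * (if j \<in> K then indicator (F j) y else 1)" for j y
  have "(\<Prod>j\<in>J. g j (x j)) * indicator (prod_emb I M K (Pi\<^sub>E K F)) x = (\<Prod>j\<in>J \<union> K. h j (x j))"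
    if "x \<in> space (PiM I M)" for x
    using J K that unfolding h_def prod.distrib
    by (simp add: indicator_prod_emb prod.If_cases Int_absorb1 Int_absorb2 Int_commute)
  moreover have "prod_emb I M K (Pi\<^sub>E K F) \<in> sets (PiM I M)"
    using K F by (auto intro!: sets_PiM_I)
  moreover have "(\<lambda>x. \<Prod>j\<in>J. g j (x j)) \<in> borel_measurable (PiM I M)"
    using J g by (intro borel_measurable_prod_ennreal) (auto intro: measurable_compose[OF measurable_component_singleton])
  ultimately have "emeasure (density (PiM I M) (\<lambda>x. \<Prod>j\<in>J. g j (x j))) (prod_emb I M K (Pi\<^sub>E K F))
      = (\<integral>\<^sup>+x. (\<Prod>j\<in>J \<union> K. h j (x j)) \<partial>PiM I M)"
    by (auto simp: emeasure_density intro!: nn_integral_cong)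
  also have "\<dots> = (\<Prod>j\<in>J \<union> K. integral\<^sup>N (M j) (h j))"
  proof (rule nn_integral_prod_components)
    show "h j \<in> borel_measurable (M j)" if "j \<in> J \<union> K" for j
      using that g F by (cases "j \<in> J"; cases "j \<in> K") (auto simp: h_def[abs_def])
  qed (use J K in auto)
  finally show ?thesis by (simp add: h_def[abs_def])
qed

lemma PiM_density_finite:
  assumes P: "\<And>i. prob_space (M i)" and J: "finite J"
    and g: "\<And>i. i \<in> J \<Longrightarrow> g i \<in> borel_measurable (M i)"
    and g1: "\<And>i. i \<in> J \<Longrightarrow> (\<integral>\<^sup>+x. g i x \<partial>M i) = 1"
  shows "density (PiM UNIV M) (\<lambda>x. \<Prod>i\<in>J. g i (x i)) = PiM UNIV (\<lambda>i. if i \<in> J then density (M i) (g i) else M i)"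
proof -
  define M' where "M' i = (if i \<in> J then density (M i) (g i) else M i)" for i
  have prob_M': "prob_space (M' i)" for i
  proof (cases "i \<in> J")
    case True
    then have "emeasure (M' i) (space (M' i)) = 1"
      using g g1 by (simp add: M'_def emeasure_density cong: nn_integral_cong)
    then show ?thesis by (rule prob_spaceI)
  qed (simp add: M'_def P)
  interpret M: product_prob_space M UNIV by (intro product_prob_spaceI P)
  interpret M': product_prob_space M' UNIV by (intro product_prob_spaceI prob_M')
  have "density (PiM UNIV M) (\<lambda>x. \<Prod>i\<in>J. g i (x i)) = PiM UNIV M'"
  proof (rule M'.PiM_eq)
    show "sets (density (PiM UNIV M) (\<lambda>x. \<Prod>i\<in>J. g i (x i))) = sets (PiM UNIV M')"
      unfolding sets_density by (rule sets_PiM_cong) (simp_all add: M'_def)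
    fix K F assume K: "finite K" and F: "\<And>j. j \<in> K \<Longrightarrow> F j \<in> sets (M' j)"
    have FM: "F j \<in> sets (M j)" if "j \<in> K" for j
      using F[OF that] by (simp add: M'_def split: if_splits)
    have "space (M' j) = space (M j)" for j
      by (simp add: M'_def)
    then have "prod_emb UNIV M' K (Pi\<^sub>E K F) = prod_emb UNIV M K (Pi\<^sub>E K F)"
      by (simp add: prod_emb_def space_PiM)
    then have "emeasure (density (PiM UNIV M) (\<lambda>x. \<Prod>i\<in>J. g i (x i))) (prod_emb UNIV M' K (Pi\<^sub>E K F))
        = (\<Prod>j\<in>J \<union> K. \<integral>\<^sup>+y. (if j \<in> J then g j y else 1) * (if j \<in> K then indicator (F j) y else 1) \<partial>M j)"
      using J K g FM by (simp add: M.emeasure_density_prod_emb)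
    also have "\<dots> = (\<Prod>j\<in>J \<union> K. if j \<in> K then emeasure (M' j) (F j) else 1)"
      using g g1 FM by (intro prod.cong refl) (auto simp: M'_def emeasure_density mult.commute)
    also have "\<dots> = (\<Prod>j\<in>K. emeasure (M' j) (F j))"
      using J K by (simp add: prod.If_cases Int_absorb1)
    finally show "emeasure (density (PiM UNIV M) (\<lambda>x. \<Prod>i\<in>J. g i (x i))) (prod_emb UNIV M' K (Pi\<^sub>E K F))
        = (\<Prod>j\<in>K. emeasure (M' j) (F j))" .
  qed
  then show ?thesis by (simp add: M'_def[abs_def])
qed

lemma (in product_prob_space) indep_vars_components:
  assumes J: "finite J" "J \<noteq> {}" "J \<subseteq> I"
  shows "P.indep_vars M (\<lambda>i x. x i) J"
proof (subst P.indep_vars_iff_distr_eq_PiM')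
  show "J \<noteq> {}" by fact
  show "(\<lambda>x. x i) \<in> PiM I M \<rightarrow>\<^sub>M M i" if "i \<in> J" for i
    using that J by (intro measurable_component_singleton) auto
  have "distr (PiM I M) (PiM J M) (\<lambda>x. \<lambda>i\<in>J. x i) = PiM J M"
    using J by (simp add: distr_PiM_restrict_finite)
  also have "\<dots> = PiM J (\<lambda>i. distr (PiM I M) (M i) (\<lambda>x. x i))"
    using J by (intro PiM_cong) (auto simp: PiM_component)
  finally show "distr (PiM I M) (PiM J M) (\<lambda>x. \<lambda>i\<in>J. x i) = PiM J (\<lambda>i. distr (PiM I M) (M i) (\<lambda>x. x i))" .
qed

section \<open>Gaussian measures\<close>

definition gauss :: "real \<Rightarrow> real \<Rightarrow> real measure" where
  "gauss \<sigma> m = density lborel (normal_density m \<sigma>)"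

definition gauss_lr :: "real \<Rightarrow> real \<Rightarrow> real \<Rightarrow> real \<Rightarrow> real" where
  "gauss_lr \<sigma> m d x = exp ((2 * d * (x - m) - d\<^sup>2) / (2 * \<sigma>\<^sup>2))"

lemma sets_gauss [simp, measurable_cong]: "sets (gauss \<sigma> m) = sets borel"
  by (simp add: gauss_def)

lemma space_gauss [simp]: "space (gauss \<sigma> m) = UNIV"
  by (simp add: gauss_def)

lemma prob_space_gauss: "\<sigma> > 0 \<Longrightarrow> prob_space (gauss \<sigma> m)"
  unfolding gauss_def by (rule prob_space_normal_density)

lemma distributed_gauss: "distributed (gauss \<sigma> m) lborel (\<lambda>x. x) (normal_density m \<sigma>)"
  unfolding distributed_def by (simp add: gauss_def distr_id2)

lemma distr_gauss_shift:
  assumes "\<sigma> > 0"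
  shows "distr (gauss \<sigma> m) (gauss \<sigma> (m + d)) (\<lambda>x. x + d) = gauss \<sigma> (m + d)"
proof -
  interpret prob_space "gauss \<sigma> m" using assms by (rule prob_space_gauss)
  have "distributed (gauss \<sigma> m) lborel (\<lambda>x. d + 1 * x) (normal_density (d + 1 * m) (\<bar>1\<bar> * \<sigma>))"
    using distributed_gauss assms by (rule normal_density_affine) simp
  then have "distr (gauss \<sigma> m) lborel (\<lambda>x. x + d) = gauss \<sigma> (m + d)"
    unfolding distributed_def by (simp add: gauss_def add.commute)
  moreover have "distr (gauss \<sigma> m) (gauss \<sigma> (m + d)) (\<lambda>x. x + d) = distr (gauss \<sigma> m) lborel (\<lambda>x. x + d)"
    by (intro distr_cong) auto
  ultimately show ?thesis by simp
qed

lemma gauss_lr_measurable [measurable]: "gauss_lr \<sigma> m d \<in> borel_measurable borel"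
  unfolding gauss_lr_def[abs_def] by measurable

lemma normal_density_mult_gauss_lr:
  "normal_density m \<sigma> x * gauss_lr \<sigma> m d x = normal_density (m + d) \<sigma> x"
proof -
  have "exp (- (x - m)\<^sup>2 / (2 * \<sigma>\<^sup>2)) * gauss_lr \<sigma> m d x = exp (- (x - (m + d))\<^sup>2 / (2 * \<sigma>\<^sup>2))"
    by (simp add: gauss_lr_def exp_add[symmetric] add_divide_distrib[symmetric] power2_eq_square algebra_simps)
  then show ?thesis unfolding normal_density_def by (simp add: mult.assoc)
qed

lemma density_gauss_lr: "density (gauss \<sigma> m) (\<lambda>x. ennreal (gauss_lr \<sigma> m d x)) = gauss \<sigma> (m + d)"
proof -
  have "density (gauss \<sigma> m) (\<lambda>x. ennreal (gauss_lr \<sigma> m d x))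
      = density lborel (\<lambda>x. ennreal (normal_density m \<sigma> x) * ennreal (gauss_lr \<sigma> m d x))"
    unfolding gauss_def by (rule density_density_eq) (auto simp: gauss_lr_def)
  then show ?thesis
    by (simp add: gauss_def ennreal_mult'[symmetric] normal_density_mult_gauss_lr)
qed

lemma nn_integral_gauss_lr:
  assumes "\<sigma> > 0"
  shows "(\<integral>\<^sup>+x. ennreal (gauss_lr \<sigma> m d x) \<partial>gauss \<sigma> m) = 1"
proof -
  interpret prob_space "gauss \<sigma> (m + d)" using assms by (rule prob_space_gauss)
  have "emeasure (density (gauss \<sigma> m) (\<lambda>x. ennreal (gauss_lr \<sigma> m d x))) UNIV
      = (\<integral>\<^sup>+x. ennreal (gauss_lr \<sigma> m d x) \<partial>gauss \<sigma> m)"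
    by (subst emeasure_density) (auto simp: gauss_lr_def)
  then show ?thesis using emeasure_space_1 by (simp add: density_gauss_lr)
qed

definition gauss_seq :: "real \<Rightarrow> real \<Rightarrow> (nat \<Rightarrow> real) measure" where
  "gauss_seq \<sigma> m = PiM UNIV (\<lambda>k. gauss \<sigma> m)"

lemma space_gauss_seq [simp]: "space (gauss_seq \<sigma> m) = UNIV"
  by (simp add: gauss_seq_def space_PiM)

lemma prob_space_gauss_seq: "\<sigma> > 0 \<Longrightarrow> prob_space (gauss_seq \<sigma> m)"
  unfolding gauss_seq_def by (intro prob_space_PiM prob_space_gauss)

lemma distributed_gauss_seq_sum:
  assumes "\<sigma> > 0" and "K > 0"
  shows "distributed (gauss_seq \<sigma> m) lborel (\<lambda>x. \<Sum>k<K. x k - m) (normal_density 0 (sqrt (K * \<sigma>\<^sup>2)))"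
proof -
  interpret product_prob_space "\<lambda>k. gauss \<sigma> m" UNIV
    using assms by (intro product_prob_spaceI prob_space_gauss)
  have "P.indep_vars (\<lambda>k. borel) (\<lambda>k x. x k - m) {..<K}"
    using P.indep_vars_compose2[OF indep_vars_components[of "{..<K}"], of "\<lambda>k y. y - m" "\<lambda>k. borel"] assms
    by (simp add: lessThan_empty_iff)
  moreover have "distributed (PiM UNIV (\<lambda>k. gauss \<sigma> m)) lborel (\<lambda>x. x k - m) (normal_density 0 \<sigma>)" for k
  proof -
    have "distr (PiM UNIV (\<lambda>k. gauss \<sigma> m)) lborel (\<lambda>x. x k) = distr (PiM UNIV (\<lambda>k. gauss \<sigma> m)) (gauss \<sigma> m) (\<lambda>x. x k)"
      by (intro distr_cong) auto
    also have "\<dots> = gauss \<sigma> m"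
      by (rule PiM_component) simp
    finally have "distributed (PiM UNIV (\<lambda>k. gauss \<sigma> m)) lborel (\<lambda>x. x k) (normal_density m \<sigma>)"
      by (simp add: distributed_def gauss_def)
    from P.normal_density_affine[OF this \<open>\<sigma> > 0\<close>, of 1 "- m"] show ?thesis by simp
  qed
  ultimately have "distributed (PiM UNIV (\<lambda>k. gauss \<sigma> m)) lborel (\<lambda>x. \<Sum>k<K. x k - m)
      (normal_density (\<Sum>k<K. 0) (sqrt (\<Sum>k<K. \<sigma>\<^sup>2)))"
    using assms by (intro P.sum_indep_normal[where \<sigma>="\<lambda>_. \<sigma>" and \<mu>="\<lambda>_. 0"]) (simp_all add: lessThan_empty_iff)
  then show ?thesis by (simp add: gauss_seq_def)
qed

section \<open>Change of measure in the Gaussian bandit model\<close>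

lemma gauss_bandit_eq_PiM: "gauss_bandit \<sigma> \<mu> = PiM UNIV (\<lambda>j. gauss_seq \<sigma> (\<mu> j))"
  by (simp add: gauss_bandit_def gauss_seq_def gauss_def)

lemma sets_gauss_bandit: "sets (gauss_bandit \<sigma> \<mu>) = sets table_space"
  unfolding gauss_bandit_def table_space_def by (intro sets_PiM_cong refl) (simp_all cong: sets_PiM_cong)

lemma space_gauss_bandit [simp]: "space (gauss_bandit \<sigma> \<mu>) = UNIV"
  by (simp add: gauss_bandit_eq_PiM space_PiM)

lemma prob_space_gauss_bandit: "\<sigma> > 0 \<Longrightarrow> prob_space (gauss_bandit \<sigma> \<mu>)"
  unfolding gauss_bandit_eq_PiM by (intro prob_space_PiM prob_space_gauss_seq)

lemma measurable_table_sample: "(\<lambda>X. X i k) \<in> borel_measurable table_space"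
proof -
  have "(\<lambda>X. X i) \<in> table_space \<rightarrow>\<^sub>M PiM UNIV (\<lambda>k. borel)"
    unfolding table_space_def by (rule measurable_component_singleton) simp
  then show ?thesis
    by (rule measurable_compose) (rule measurable_component_singleton, simp)
qed

definition gauss_seq_prefix :: "real \<Rightarrow> real \<Rightarrow> real \<Rightarrow> nat \<Rightarrow> (nat \<Rightarrow> real) measure" where
  "gauss_seq_prefix \<sigma> m d K = PiM UNIV (\<lambda>k. if k \<in> {..<K} then gauss \<sigma> (m + d) else gauss \<sigma> m)"

definition prefix_lr :: "real \<Rightarrow> real \<Rightarrow> real \<Rightarrow> nat \<Rightarrow> (nat \<Rightarrow> real) \<Rightarrow> ennreal" where
  "prefix_lr \<sigma> m d K x = (\<Prod>k<K. ennreal (gauss_lr \<sigma> m d (x k)))"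

definition shift_tail :: "nat \<Rightarrow> nat \<Rightarrow> real \<Rightarrow> sample_table \<Rightarrow> sample_table" where
  "shift_tail i K d X = X(i := (\<lambda>k. if k < K then X i k else X i k + d))"

lemma prob_space_gauss_seq_prefix: "\<sigma> > 0 \<Longrightarrow> prob_space (gauss_seq_prefix \<sigma> m d K)"
  unfolding gauss_seq_prefix_def by (intro prob_space_PiM) (simp add: prob_space_gauss)

lemma prefix_lr_measurable [measurable]: "prefix_lr \<sigma> m d K \<in> borel_measurable (gauss_seq \<sigma> m')"
  unfolding prefix_lr_def gauss_seq_def by measurable

lemma density_gauss_seq_prefix_lr:
  assumes "\<sigma> > 0"
  shows "density (gauss_seq \<sigma> m) (prefix_lr \<sigma> m d K) = gauss_seq_prefix \<sigma> m d K"
proof -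
  have "density (gauss_seq \<sigma> m) (prefix_lr \<sigma> m d K)
      = PiM UNIV (\<lambda>k. if k \<in> {..<K} then density (gauss \<sigma> m) (\<lambda>x. ennreal (gauss_lr \<sigma> m d x)) else gauss \<sigma> m)"
    unfolding gauss_seq_def prefix_lr_def[abs_def] using assms
    by (intro PiM_density_finite) (auto simp: prob_space_gauss nn_integral_gauss_lr)
  then show ?thesis by (simp add: density_gauss_lr gauss_seq_prefix_def cong: if_cong)
qed

lemma nn_integral_prefix_lr:
  assumes "\<sigma> > 0"
  shows "(\<integral>\<^sup>+x. prefix_lr \<sigma> m d K x \<partial>gauss_seq \<sigma> m) = 1"
proof -
  interpret prob_space "gauss_seq_prefix \<sigma> m d K"
    using assms by (rule prob_space_gauss_seq_prefix)
  have "emeasure (density (gauss_seq \<sigma> m) (prefix_lr \<sigma> m d K)) UNIV = (\<integral>\<^sup>+x. prefix_lr \<sigma> m d K x \<partial>gauss_seq \<sigma> m)"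
    using sets.top[of "gauss_seq \<sigma> m"] by (subst emeasure_density) auto
  moreover have "space (gauss_seq_prefix \<sigma> m d K) = UNIV"
    by (auto simp: gauss_seq_prefix_def space_PiM PiE_def extensional_def)
  ultimately show ?thesis
    using emeasure_space_1 by (simp add: density_gauss_seq_prefix_lr[OF assms])
qed

lemma density_gauss_bandit_prefix_lr:
  assumes "\<sigma> > 0"
  shows "density (gauss_bandit \<sigma> \<mu>) (\<lambda>X. prefix_lr \<sigma> (\<mu> i) d K (X i))
       = PiM UNIV (\<lambda>j. if j = i then gauss_seq_prefix \<sigma> (\<mu> i) d K else gauss_seq \<sigma> (\<mu> j))"
proof -
  have "density (gauss_bandit \<sigma> \<mu>) (\<lambda>X. \<Prod>j\<in>{i}. prefix_lr \<sigma> (\<mu> j) d K (X j))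
      = PiM UNIV (\<lambda>j. if j \<in> {i} then density (gauss_seq \<sigma> (\<mu> j)) (prefix_lr \<sigma> (\<mu> j) d K) else gauss_seq \<sigma> (\<mu> j))"
    unfolding gauss_bandit_eq_PiM using assms
    by (intro PiM_density_finite) (auto simp: prob_space_gauss_seq nn_integral_prefix_lr)
  then show ?thesis
    using assms by (simp add: density_gauss_seq_prefix_lr cong: if_cong)
qed

lemma distr_shift_tail:
  assumes "\<sigma> > 0"
  shows "distr (PiM UNIV (\<lambda>j. if j = i then gauss_seq_prefix \<sigma> (\<mu> i) d K else gauss_seq \<sigma> (\<mu> j)))
           (gauss_bandit \<sigma> (\<mu>(i := \<mu> i + d))) (shift_tail i K d)
       = gauss_bandit \<sigma> (\<mu>(i := \<mu> i + d))"
proof -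
  define g where "g k y = (if k < K then y else y + d)" for k and y :: real
  define f where "f j = (if j = i then (\<lambda>x k. g k (x k)) else (\<lambda>x :: nat \<Rightarrow> real. x))" for j
  define F where "F = (\<lambda>j. if j = i then gauss_seq_prefix \<sigma> (\<mu> i) d K else gauss_seq \<sigma> (\<mu> j))"
  have "shift_tail i K d = (\<lambda>X j. f j (X j))"
    by (auto simp: shift_tail_def f_def g_def fun_eq_iff)
  have g_meas: "g k \<in> gauss \<sigma> m \<rightarrow>\<^sub>M gauss \<sigma> m'" for k m m'
    by (cases "k < K") (simp_all add: g_def[abs_def] measurable_cong_sets[OF sets_gauss sets_gauss])
  have distr_g: "distr (if k < K then gauss \<sigma> (\<mu> i + d) else gauss \<sigma> (\<mu> i)) (gauss \<sigma> (\<mu> i + d)) (g k) = gauss \<sigma> (\<mu> i + d)" for k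
    using assms by (auto simp: g_def[abs_def] distr_gauss_shift distr_id)
  have f_meas: "f j \<in> F j \<rightarrow>\<^sub>M gauss_seq \<sigma> ((\<mu>(i := \<mu> i + d)) j)" for j
    by (auto simp: f_def F_def gauss_seq_prefix_def gauss_seq_def intro!: measurable_PiM_map g_meas)
  have distr_f: "distr (F j) (gauss_seq \<sigma> ((\<mu>(i := \<mu> i + d)) j)) (f j) = gauss_seq \<sigma> ((\<mu>(i := \<mu> i + d)) j)" for j
  proof (cases "j = i")
    case True
    then show ?thesis
      using assms unfolding F_def f_def gauss_seq_prefix_def gauss_seq_def
      by (simp add: distr_PiM_map prob_space_gauss g_meas distr_g)
  qed (simp add: F_def f_def distr_id)
  have "prob_space (F j)" for j
    using assms by (simp add: F_def prob_space_gauss_seq prob_space_gauss_seq_prefix)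
  then show ?thesis
    unfolding \<open>shift_tail i K d = _\<close> F_def[symmetric] gauss_bandit_eq_PiM[of _ "\<mu>(i := \<mu> i + d)"]
    by (simp only: distr_PiM_map f_meas distr_f)
qed

lemma measurable_shift_tail: "shift_tail i K d \<in> table_space \<rightarrow>\<^sub>M table_space"
proof -
  have "(\<lambda>x k. if k < K then x k else x k + d) \<in> PiM UNIV (\<lambda>k. borel) \<rightarrow>\<^sub>M PiM UNIV (\<lambda>k. (borel :: real measure))"
    by (rule measurable_PiM_single') auto
  moreover have "shift_tail i K d = (\<lambda>X j. (if j = i then (\<lambda>x k. if k < K then x k else x k + d) else (\<lambda>x. x)) (X j))"
    by (auto simp: shift_tail_def fun_eq_iff)
  ultimately show ?thesis
    unfolding table_space_def by (auto intro!: measurable_PiM_map)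
qed

lemma emeasure_gauss_bandit_shift:
  assumes "\<sigma> > 0" and E: "E \<in> sets table_space" and inv: "shift_tail i K d -` E = E"
  shows "emeasure (gauss_bandit \<sigma> (\<mu>(i := \<mu> i + d))) E
       = (\<integral>\<^sup>+X. prefix_lr \<sigma> (\<mu> i) d K (X i) * indicator E X \<partial>gauss_bandit \<sigma> \<mu>)"
proof -
  define P where "P = PiM UNIV (\<lambda>j. if j = i then gauss_seq_prefix \<sigma> (\<mu> i) d K else gauss_seq \<sigma> (\<mu> j))"
  have P_density: "P = density (gauss_bandit \<sigma> \<mu>) (\<lambda>X. prefix_lr \<sigma> (\<mu> i) d K (X i))"
    using density_gauss_bandit_prefix_lr[OF assms(1)] by (simp add: P_def)
  have lr_meas: "(\<lambda>X. prefix_lr \<sigma> (\<mu> i) d K (X i)) \<in> borel_measurable (gauss_bandit \<sigma> \<mu>)"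
    unfolding gauss_bandit_eq_PiM by measurable
  have shift_meas: "shift_tail i K d \<in> P \<rightarrow>\<^sub>M gauss_bandit \<sigma> (\<mu>(i := \<mu> i + d))"
    using measurable_shift_tail by (simp add: P_density measurable_cong_sets[OF _ sets_gauss_bandit] sets_gauss_bandit)
  have "emeasure (gauss_bandit \<sigma> (\<mu>(i := \<mu> i + d))) E = emeasure (distr P (gauss_bandit \<sigma> (\<mu>(i := \<mu> i + d))) (shift_tail i K d)) E"
    using distr_shift_tail[OF assms(1)] by (simp add: P_def)
  also have "\<dots> = emeasure P E"
    using E inv shift_meas by (simp add: emeasure_distr sets_gauss_bandit P_density)
  also have "\<dots> = (\<integral>\<^sup>+X. prefix_lr \<sigma> (\<mu> i) d K (X i) * indicator E X \<partial>gauss_bandit \<sigma> \<mu>)"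
    using E lr_meas by (simp add: P_density emeasure_density sets_gauss_bandit)
  finally show ?thesis .
qed

lemma prefix_lr_eq_exp:
  assumes "\<sigma> > 0"
  shows "prefix_lr \<sigma> m d K x = ennreal (exp (d / \<sigma>\<^sup>2 * (\<Sum>k<K. x k - m) - K * d\<^sup>2 / (2 * \<sigma>\<^sup>2)))"
proof -
  have "prefix_lr \<sigma> m d K x = ennreal (\<Prod>k<K. gauss_lr \<sigma> m d (x k))"
    unfolding prefix_lr_def by (rule prod_ennreal) (simp add: gauss_lr_def)
  also have "(\<Prod>k<K. gauss_lr \<sigma> m d (x k)) = (\<Prod>k<K. exp (d / \<sigma>\<^sup>2 * (x k - m) - d\<^sup>2 / (2 * \<sigma>\<^sup>2)))"
    unfolding gauss_lr_def using assms
    by (intro prod.cong refl arg_cong[where f=exp]) (simp add: field_simps power2_eq_square)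
  also have "\<dots> = exp (\<Sum>k<K. d / \<sigma>\<^sup>2 * (x k - m) - d\<^sup>2 / (2 * \<sigma>\<^sup>2))"
    by (simp add: exp_sum)
  also have "(\<Sum>k<K. d / \<sigma>\<^sup>2 * (x k - m) - d\<^sup>2 / (2 * \<sigma>\<^sup>2)) = d / \<sigma>\<^sup>2 * (\<Sum>k<K. x k - m) - K * d\<^sup>2 / (2 * \<sigma>\<^sup>2)"
    by (simp only: sum_subtractf sum_distrib_left[symmetric] sum_constant card_lessThan) simp
  finally show ?thesis .
qed

lemma distributed_gauss_bandit_sum:
  assumes "\<sigma> > 0" and "K > 0"
  shows "distributed (gauss_bandit \<sigma> \<mu>) lborel (\<lambda>X. \<Sum>k<K. X i k - \<mu> i) (normal_density 0 (sqrt (K * \<sigma>\<^sup>2)))"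
proof -
  have arm: "(\<lambda>X. X i) \<in> gauss_bandit \<sigma> \<mu> \<rightarrow>\<^sub>M gauss_seq \<sigma> (\<mu> i)"
    unfolding gauss_bandit_eq_PiM by simp
  have sum: "(\<lambda>x. \<Sum>k<K. x k - \<mu> i) \<in> gauss_seq \<sigma> (\<mu> i) \<rightarrow>\<^sub>M lborel"
    unfolding gauss_seq_def by measurable
  have "distr (gauss_bandit \<sigma> \<mu>) (gauss_seq \<sigma> (\<mu> i)) (\<lambda>X. X i) = gauss_seq \<sigma> (\<mu> i)"
    unfolding gauss_bandit_eq_PiM using assms by (intro distr_PiM_component) (simp_all add: prob_space_gauss_seq)
  then have "distr (gauss_bandit \<sigma> \<mu>) lborel (\<lambda>X. \<Sum>k<K. X i k - \<mu> i) = distr (gauss_seq \<sigma> (\<mu> i)) lborel (\<lambda>x. \<Sum>k<K. x k - \<mu> i)"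
    using distr_distr[OF sum arm] by (simp add: comp_def)
  with distributed_gauss_seq_sum[OF assms, of "\<mu> i"] measurable_compose[OF arm sum] show ?thesis
    by (simp add: distributed_def)
qed

lemma gauss_bandit_sum_moments:
  fixes \<sigma> :: real and K i :: nat and \<mu> :: "nat \<Rightarrow> real"
  assumes "\<sigma> > 0"
  defines "S \<equiv> \<lambda>X. \<Sum>k<K. X i k - \<mu> i"
  shows "integrable (gauss_bandit \<sigma> \<mu>) S" and "(\<integral>X. S X \<partial>gauss_bandit \<sigma> \<mu>) = 0"
    and "integrable (gauss_bandit \<sigma> \<mu>) (\<lambda>X. (S X)\<^sup>2)" and "(\<integral>X. (S X)\<^sup>2 \<partial>gauss_bandit \<sigma> \<mu>) = K * \<sigma>\<^sup>2"
proof -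
  interpret prob_space "gauss_bandit \<sigma> \<mu>"
    using assms(1) by (rule prob_space_gauss_bandit)
  have "integrable (gauss_bandit \<sigma> \<mu>) S \<and> (\<integral>X. S X \<partial>gauss_bandit \<sigma> \<mu>) = 0 \<and>
    integrable (gauss_bandit \<sigma> \<mu>) (\<lambda>X. (S X)\<^sup>2) \<and> (\<integral>X. (S X)\<^sup>2 \<partial>gauss_bandit \<sigma> \<mu>) = K * \<sigma>\<^sup>2"
  proof (cases "K = 0")
    case False
    have sd: "sqrt (K * \<sigma>\<^sup>2) > 0" using False assms by simp
    have D: "distributed (gauss_bandit \<sigma> \<mu>) lborel S (normal_density 0 (sqrt (K * \<sigma>\<^sup>2)))"
      unfolding S_def using False assms(1) by (intro distributed_gauss_bandit_sum) auto
    have "integrable (gauss_bandit \<sigma> \<mu>) S"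
      using distributed_integrable[OF D, of "\<lambda>x. x"] integrable_normal_moment_nz_1[OF sd] by simp
    moreover have "expectation S = 0"
      using normal_distributed_expectation[OF sd] D False by simp
    moreover have "integrable (gauss_bandit \<sigma> \<mu>) (\<lambda>X. (S X)\<^sup>2)"
      using distributed_integrable[OF D, of "\<lambda>x. x\<^sup>2"] integrable_normal_moment[of "sqrt (K * \<sigma>\<^sup>2)" 0 2] sd by simp
    moreover have "variance S = K * \<sigma>\<^sup>2"
      using normal_distributed_variance[OF sd] D False assms by simp
    ultimately show ?thesis by simp
  qed (simp add: S_def)
  then show "integrable (gauss_bandit \<sigma> \<mu>) S" and "(\<integral>X. S X \<partial>gauss_bandit \<sigma> \<mu>) = 0"
    and "integrable (gauss_bandit \<sigma> \<mu>) (\<lambda>X. (S X)\<^sup>2)" and "(\<integral>X. (S X)\<^sup>2 \<partial>gauss_bandit \<sigma> \<mu>) = K * \<sigma>\<^sup>2"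
    by auto
qed

lemma measure_gauss_bandit_shift:
  fixes \<sigma> d :: real and K i :: nat and \<mu> :: "nat \<Rightarrow> real"
  assumes "\<sigma> > 0" and E: "E \<in> sets table_space" and inv: "shift_tail i K d -` E = E"
  defines "f \<equiv> \<lambda>X. indicator E X * exp (d / \<sigma>\<^sup>2 * (\<Sum>k<K. X i k - \<mu> i) - K * d\<^sup>2 / (2 * \<sigma>\<^sup>2))"
  shows "integrable (gauss_bandit \<sigma> \<mu>) f"
    and "measure (gauss_bandit \<sigma> (\<mu>(i := \<mu> i + d))) E = (\<integral>X. f X \<partial>gauss_bandit \<sigma> \<mu>)"
proof -
  interpret \<nu>': prob_space "gauss_bandit \<sigma> (\<mu>(i := \<mu> i + d))"
    using assms(1) by (rule prob_space_gauss_bandit)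
  have f_meas: "f \<in> borel_measurable (gauss_bandit \<sigma> \<mu>)"
  proof -
    note [measurable] = E measurable_table_sample
    have "f \<in> borel_measurable table_space"
      unfolding f_def by measurable
    then show ?thesis by (simp add: measurable_cong_sets[OF sets_gauss_bandit refl])
  qed
  have "emeasure (gauss_bandit \<sigma> (\<mu>(i := \<mu> i + d))) E = (\<integral>\<^sup>+X. ennreal (f X) \<partial>gauss_bandit \<sigma> \<mu>)"
    unfolding emeasure_gauss_bandit_shift[OF assms(1-3)] f_def
    by (intro nn_integral_cong) (simp add: prefix_lr_eq_exp[OF assms(1)] indicator_def mult.commute)
  moreover have f_nonneg: "0 \<le> f X" for X
    by (simp add: f_def)
  ultimately have f_int: "integrable (gauss_bandit \<sigma> \<mu>) f"
    using f_meas \<nu>'.emeasure_finite[of E] by (intro integrableI_nonneg) (auto simp: less_top)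
  then show "integrable (gauss_bandit \<sigma> \<mu>) f" .
  show "measure (gauss_bandit \<sigma> (\<mu>(i := \<mu> i + d))) E = (\<integral>X. f X \<partial>gauss_bandit \<sigma> \<mu>)"
    using \<open>emeasure _ E = _\<close> f_int f_nonneg
    by (simp add: measure_def nn_integral_eq_integral integral_nonneg)
qed

text \<open>On the event the right-hand side is bounded by the tangent of \<open>exp\<close> at \<open>a\<close>; the
  quadratic terms in \<open>z\<close> make the left-hand side nonpositive off the event while keeping it
  linear in \<open>z\<close> and \<open>z\<^sup>2\<close>, so that only two moments of \<open>z\<close> are needed after integration.\<close>

lemma exp_indicator_lower_bound:
  fixes a w z q :: real
  assumes "q > 0"
  shows "exp a * (of_bool b * (1 - a - w) + z / 2 - z\<^sup>2 / (4 * q) - q / 4) \<le> of_bool b * exp (z - w)"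
proof -
  have quad: "z / 2 - z\<^sup>2 / (4 * q) - q / 4 = - (z - q)\<^sup>2 / (4 * q)"
    and quad': "z / 2 - z\<^sup>2 / (4 * q) - q / 4 = z - (z + q)\<^sup>2 / (4 * q)"
    using assms by (simp_all add: field_simps power2_eq_square)
  show ?thesis
  proof (cases b)
    case True
    have "z / 2 - z\<^sup>2 / (4 * q) - q / 4 \<le> z"
      unfolding quad' using assms by simp
    then have "exp a * ((1 - a - w) + z / 2 - z\<^sup>2 / (4 * q) - q / 4) \<le> exp a * (1 + (z - w - a))"
      by (intro mult_left_mono) auto
    also have "\<dots> \<le> exp a * exp (z - w - a)"
      by (intro mult_left_mono exp_ge_add_one_self) auto
    also have "\<dots> = exp (z - w)"
      by (simp add: exp_add[symmetric])
    finally show ?thesis using True by simp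
  next
    case False
    have "exp a * (- (z - q)\<^sup>2 / (4 * q)) \<le> 0"
      using assms by (intro mult_nonneg_nonpos) auto
    then show ?thesis using False quad by simp
  qed
qed

lemma measure_gauss_bandit_shift_ge:
  fixes \<sigma> d a q v :: real and K i :: nat and \<mu> :: "nat \<Rightarrow> real"
  assumes "\<sigma> > 0" and "q > 0" and E: "E \<in> sets table_space" and inv: "shift_tail i K d -` E = E"
    and v: "v = K * d\<^sup>2 / \<sigma>\<^sup>2"
  shows "exp a * (measure (gauss_bandit \<sigma> \<mu>) E * (1 - a - v / 2) - v / (4 * q) - q / 4)
    \<le> measure (gauss_bandit \<sigma> (\<mu>(i := \<mu> i + d))) E"
proof -
  let ?\<nu> = "gauss_bandit \<sigma> \<mu>"
  interpret \<nu>: prob_space ?\<nu>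
    using assms(1) by (rule prob_space_gauss_bandit)
  define S where "S X = (\<Sum>k<K. X i k - \<mu> i)" for X :: sample_table
  define Z where "Z X = d / \<sigma>\<^sup>2 * S X" for X
  define h where "h X = exp a * (indicator E X * (1 - a - v / 2) + Z X / 2 - (Z X)\<^sup>2 / (4 * q) - q / 4)" for X
  have "K * d\<^sup>2 / (2 * \<sigma>\<^sup>2) = v / 2"
    by (simp add: v)
  note shift = measure_gauss_bandit_shift[OF assms(1) E inv, where \<mu>=\<mu>, unfolded this S_def[symmetric] Z_def[symmetric]]
  note moments = gauss_bandit_sum_moments[OF assms(1), where K=K and i=i and \<mu>=\<mu>, unfolded S_def[symmetric]]
  have E_ev: "E \<in> \<nu>.events"
    using E by (simp add: sets_gauss_bandit)
  then have E_int: "integrable ?\<nu> (indicator E :: _ \<Rightarrow> real)"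
    by (intro integrable_real_indicator) (simp_all add: \<nu>.emeasure_finite less_top[symmetric])
  have h_eq: "h = (\<lambda>X. exp a * (1 - a - v / 2) * indicator E X + exp a * d / (2 * \<sigma>\<^sup>2) * S X
      - exp a * (d / \<sigma>\<^sup>2)\<^sup>2 / (4 * q) * (S X)\<^sup>2 - exp a * q / 4)"
    by (simp add: fun_eq_iff h_def Z_def field_simps power2_eq_square)
  have "exp a * (measure ?\<nu> E * (1 - a - v / 2) - v / (4 * q) - q / 4)
      = exp a * (1 - a - v / 2) * measure ?\<nu> E - exp a * (d / \<sigma>\<^sup>2)\<^sup>2 / (4 * q) * (K * \<sigma>\<^sup>2) - exp a * q / 4"
    using assms(1) by (simp add: v field_simps power2_eq_square)
  also have "\<dots> = (\<integral>X. h X \<partial>?\<nu>)"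
    unfolding h_eq using E_int moments E_ev \<nu>.prob_space by simp
  also have "\<dots> \<le> (\<integral>X. indicator E X * exp (Z X - v / 2) \<partial>?\<nu>)"
  proof (rule integral_mono)
    show "integrable ?\<nu> h"
      unfolding h_eq using E_int moments by simp
    show "h X \<le> indicator E X * exp (Z X - v / 2)" for X
      using exp_indicator_lower_bound[OF assms(2), of a "X \<in> E" "v / 2" "Z X"]
      by (simp add: h_def indicator_def)
  qed (rule shift(1))
  also have "\<dots> = measure (gauss_bandit \<sigma> (\<mu>(i := \<mu> i + d))) E"
    by (rule shift(2)[symmetric])
  finally show ?thesis .
qed

text \<open>The choice \<open>a = - c/2 - 3 sqrt c / 4\<close>, \<open>q = sqrt c\<close> makes the bracket at least \<open>2/3\<close>
  while \<open>exp a \<ge> exp (- 3 c / 2) = 2 \<delta>\<close>.\<close>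

lemma delta_lt_shift_lower_bound:
  fixes \<delta> c v p :: real
  assumes "0 < \<delta>" and "\<delta> \<le> 1/6" and c: "c = 2/3 * ln (1 / (2 * \<delta>))"
    and "0 \<le> v" and "v \<le> c" and "p > 2/3"
  shows "\<delta> < exp (- c / 2 - 3 * sqrt c / 4)
    * (p * (1 - (- c / 2 - 3 * sqrt c / 4) - v / 2) - v / (4 * sqrt c) - sqrt c / 4)"
proof -
  define r where "r = sqrt c"
  define a where "a = - c / 2 - 3 * r / 4"
  have "1 \<le> ln (3 :: real)"
    using exp_le by (subst ln_ge_iff) auto
  also have "ln 3 \<le> ln (1 / (2 * \<delta>))"
    using assms(1,2) by (subst ln_le_cancel_iff) (auto simp: field_simps)
  finally have "c \<ge> 2/3" using c by simp
  then have r_pos: "r > 0" and r_sq: "r\<^sup>2 = c"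
    by (simp_all add: r_def)
  have "3/4 \<le> r"
    unfolding r_def by (rule real_le_rsqrt) (use \<open>c \<ge> 2/3\<close> in \<open>simp add: power2_eq_square\<close>)
  then have "3 * r / 4 \<le> c"
    using r_pos r_sq mult_left_mono[OF \<open>3/4 \<le> r\<close>, of r] by (simp add: power2_eq_square)
  have "2/3 * (1 + 3 * r / 4) \<le> p * (1 + 3 * r / 4)"
    using assms(6) r_pos by (intro mult_right_mono) auto
  also have "\<dots> \<le> p * (1 - a - v / 2)"
    using assms(5,6) by (intro mult_left_mono) (auto simp: a_def)
  finally have "2/3 * (1 + 3 * r / 4) \<le> p * (1 - a - v / 2)" .
  moreover have "v / (4 * r) \<le> r / 4"
    using assms(5) r_pos r_sq by (simp add: field_simps power2_eq_square)
  ultimately have bracket: "2/3 \<le> p * (1 - a - v / 2) - v / (4 * r) - r / 4"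
    by simp
  have "2 * \<delta> = exp (- (3/2 * c))"
    using assms(1) by (simp add: c exp_minus)
  also have "\<dots> \<le> exp a"
    using \<open>3 * r / 4 \<le> c\<close> unfolding a_def by simp
  finally have "\<delta> < 2/3 * exp a"
    using assms(1) by simp
  also have "\<dots> \<le> exp a * (p * (1 - a - v / 2) - v / (4 * r) - r / 4)"
    using bracket by (simp add: mult.commute)
  finally show ?thesis
    by (simp add: a_def r_def)
qed

lemma measure_gauss_bandit_shift_gt:
  fixes \<sigma> \<delta> d :: real and K i :: nat and \<mu> :: "nat \<Rightarrow> real"
  assumes "\<sigma> > 0" and "0 < \<delta>" and "\<delta> \<le> 1/6"
    and "E \<in> sets table_space" and "shift_tail i K d -` E = E"
    and "K * d\<^sup>2 / \<sigma>\<^sup>2 \<le> 2/3 * ln (1 / (2 * \<delta>))"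
    and "measure (gauss_bandit \<sigma> \<mu>) E > 2/3"
  shows "measure (gauss_bandit \<sigma> (\<mu>(i := \<mu> i + d))) E > \<delta>"
proof -
  define c where "c = 2/3 * ln (1 / (2 * \<delta>))"
  have "c > 0"
    using assms(2,3) by (simp add: c_def ln_gt_zero field_simps)
  have "\<delta> < exp (- c / 2 - 3 * sqrt c / 4) * (measure (gauss_bandit \<sigma> \<mu>) E * (1 - (- c / 2 - 3 * sqrt c / 4)
      - K * d\<^sup>2 / \<sigma>\<^sup>2 / 2) - K * d\<^sup>2 / \<sigma>\<^sup>2 / (4 * sqrt c) - sqrt c / 4)"
    using assms(2,3,6,7) by (intro delta_lt_shift_lower_bound) (simp_all add: c_def)
  also have "\<dots> \<le> measure (gauss_bandit \<sigma> (\<mu>(i := \<mu> i + d))) E"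
    using assms(1,4,5) \<open>c > 0\<close> by (intro measure_gauss_bandit_shift_ge) auto
  finally show ?thesis .
qed

section \<open>Batched algorithms\<close>

lemma cumN_mono: "t \<le> T \<Longrightarrow> cumN A t X i \<le> cumN A T X i"
  by (induction T rule: dec_induct) auto

lemma batched_alg_observed:
  assumes alg: "batched_alg n T A out"
    and agree: "\<And>j k. k < cumN A T X j \<Longrightarrow> X j k = Y j k"
  shows "cumN A T Y = cumN A T X" and "out Y = out X"
proof -
  have agree_t: "\<forall>j k. k < cumN A t X j \<longrightarrow> X j k = Y j k" if "t \<le> T" for t
    using agree cumN_mono[OF that] by (meson order_less_le_trans)
  have "t \<le> T \<Longrightarrow> cumN A t Y = cumN A t X" for t
  proof (induction t)
    case (Suc t)
    then have "A t X = A t Y"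
      using alg agree_t[of t] unfolding batched_alg_def by simp
    with Suc show ?case by (simp add: fun_eq_iff)
  qed (simp add: fun_eq_iff)
  then show "cumN A T Y = cumN A T X" by simp
  show "out Y = out X"
    using alg agree_t[of T] unfolding batched_alg_def by (metis order_refl)
qed

lemma measurable_cumN:
  assumes "batched_alg n T A out" and "t \<le> T"
  shows "(\<lambda>X. real (cumN A t X i)) \<in> borel_measurable table_space"
  using assms(2)
proof (induction t)
  case (Suc t)
  have "(\<lambda>X. A t X i) \<in> table_space \<rightarrow>\<^sub>M count_space UNIV"
    using assms(1) Suc.prems unfolding batched_alg_def by simp
  then have "(\<lambda>X. real (A t X i)) \<in> borel_measurable table_space"
    by (rule measurable_compose) simp
  with Suc show ?case by simp
qed simp

lemma sets_few_pulls:
  assumes "batched_alg n T A out"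
  shows "{X. cumN A T X i \<le> K \<and> P (out X)} \<in> sets table_space"
proof -
  have [measurable]: "(\<lambda>X. real (cumN A T X i)) \<in> borel_measurable table_space"
    using assms order_refl by (rule measurable_cumN)
  have "{X \<in> space table_space. real (cumN A T X i) \<le> real K} \<in> sets table_space"
    by measurable
  moreover have "out -` {j. P j} \<inter> space table_space \<in> sets table_space"
    using assms by (intro measurable_sets[of _ _ "count_space UNIV"]) (auto simp: batched_alg_def)
  ultimately have "{X \<in> space table_space. real (cumN A T X i) \<le> real K} \<inter> (out -` {j. P j} \<inter> space table_space) \<in> sets table_space"
    by (rule sets.Int)
  moreover have "space table_space = UNIV"
    by (simp add: table_space_def space_PiM)
  ultimately show ?thesis
    by (simp add: Collect_conj_eq Int_commute vimage_def)
qed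

lemma shift_tail_preimage_few_pulls:
  assumes "batched_alg n T A out"
  shows "shift_tail i K d -` {X. cumN A T X i \<le> K \<and> P (out X)} = {X. cumN A T X i \<le> K \<and> P (out X)}"
proof -
  have observed: "cumN A T Y i = cumN A T X i \<and> out Y = out X"
    if "cumN A T X i \<le> K" and "\<And>j k. j \<noteq> i \<or> k < K \<Longrightarrow> X j k = Y j k" for X Y
    using batched_alg_observed[OF assms, of X Y] that by (metis order_less_le_trans)
  have same: "cumN A T Y i \<le> K \<and> P (out Y) \<longleftrightarrow> cumN A T X i \<le> K \<and> P (out X)"
    if "\<And>j k. j \<noteq> i \<or> k < K \<Longrightarrow> X j k = Y j k" for X Y
  proof
    assume "cumN A T Y i \<le> K \<and> P (out Y)"
    with observed[of Y X] that show "cumN A T X i \<le> K \<and> P (out X)" by auto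
  next
    assume "cumN A T X i \<le> K \<and> P (out X)"
    with observed[of X Y] that show "cumN A T Y i \<le> K \<and> P (out Y)" by auto
  qed
  show ?thesis
  proof (rule set_eqI)
    fix X
    have "j \<noteq> i \<or> k < K \<Longrightarrow> X j k = shift_tail i K d X j k" for j k
      by (auto simp: shift_tail_def)
    then show "X \<in> shift_tail i K d -` {X. cumN A T X i \<le> K \<and> P (out X)} \<longleftrightarrow> X \<in> {X. cumN A T X i \<le> K \<and> P (out X)}"
      using same[of X "shift_tail i K d X"] by simp
  qed
qed

lemma mu_le_mu_top: "j < n \<Longrightarrow> \<mu> j \<le> mu_top n \<mu>"
  unfolding mu_top_def by (intro Max_ge) auto

lemma mu_le_mu_top_minus_gap:
  assumes "j < n" and "j \<noteq> best_arm n \<mu>"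
  shows "\<mu> j \<le> mu_top n \<mu> - gap n \<mu> (best_arm n \<mu>)"
proof -
  have "\<mu> j \<le> Max (\<mu> ` ({..<n} - {best_arm n \<mu>}))"
    using assms by (intro Max_ge) auto
  then show ?thesis by (simp add: gap_def)
qed

lemma measurable_out:
  "batched_alg n T A out \<Longrightarrow> out \<in> gauss_bandit \<sigma> \<mu> \<rightarrow>\<^sub>M count_space UNIV"
  unfolding batched_alg_def by (simp add: measurable_cong_sets[OF sets_gauss_bandit refl])

lemma PAC_gauss_bad_output_le:
  assumes "PAC_gauss n \<sigma> \<epsilon> \<delta> A out" and "batched_alg n T A out" and "\<sigma> > 0"
    and "\<forall>j<n. \<mu> j \<in> {0..1}" and bad: "\<And>X. X \<in> F \<Longrightarrow> \<mu> (out X) \<le> mu_top n \<mu> - \<epsilon>"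
  shows "measure (gauss_bandit \<sigma> \<mu>) F \<le> \<delta>"
proof -
  interpret prob_space "gauss_bandit \<sigma> \<mu>"
    using assms(3) by (rule prob_space_gauss_bandit)
  let ?good = "{X \<in> space (gauss_bandit \<sigma> \<mu>). \<mu> (out X) > mu_top n \<mu> - \<epsilon>}"
  have "?good \<in> events"
    using measurable_out[OF assms(2)] by measurable
  then have "measure (gauss_bandit \<sigma> \<mu>) {X. \<mu> (out X) \<le> mu_top n \<mu> - \<epsilon>} = 1 - prob ?good"
    by (subst prob_compl[symmetric]) (auto intro!: arg_cong[where f=prob])
  moreover have "prob ?good \<ge> 1 - \<delta>"
    using assms(1,4) unfolding PAC_gauss_def by blast
  moreover have "{X \<in> space (gauss_bandit \<sigma> \<mu>). \<mu> (out X) \<le> mu_top n \<mu> - \<epsilon>} \<in> events"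
    using measurable_out[OF assms(2)] by measurable
  then have "prob F \<le> prob {X. \<mu> (out X) \<le> mu_top n \<mu> - \<epsilon>}"
    using bad by (intro finite_measure_mono) auto
  ultimately show ?thesis by simp
qed

lemma PAC_gauss_raised_arm:
  assumes "PAC_gauss n \<sigma> \<epsilon> \<delta> A out" and alg: "batched_alg n T A out" and "\<sigma> > 0" and "\<epsilon> > 0"
    and \<mu>: "\<forall>j<n. \<mu> j \<in> {0..1}" and "i < n" and "mu_top n \<mu> + \<epsilon> \<le> 1"
    and not_i: "\<And>X. X \<in> F \<Longrightarrow> out X \<noteq> i"
  shows "measure (gauss_bandit \<sigma> (\<mu>(i := mu_top n \<mu> + \<epsilon>))) F \<le> \<delta>"
proof (rule PAC_gauss_bad_output_le[OF assms(1,2,3)])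
  let ?\<mu>' = "\<mu>(i := mu_top n \<mu> + \<epsilon>)"
  have "\<mu> i \<ge> 0" using \<mu> \<open>i < n\<close> by simp
  then show "\<forall>j<n. ?\<mu>' j \<in> {0..1}"
    using \<mu> assms(4,6,7) mu_le_mu_top[OF \<open>i < n\<close>, of \<mu>] by auto
  have top': "mu_top n \<mu> + \<epsilon> \<le> mu_top n ?\<mu>'"
    using mu_le_mu_top[OF \<open>i < n\<close>, of ?\<mu>'] by simp
  fix X assume "X \<in> F"
  moreover have "out X < n" using alg by (simp add: batched_alg_def)
  ultimately show "?\<mu>' (out X) \<le> mu_top n ?\<mu>' - \<epsilon>"
    using not_i top' mu_le_mu_top[of "out X" n \<mu>] by simp
qed

lemma prob_few_pulls_wrong_output_le:
  assumes PAC: "PAC_gauss n \<sigma> \<epsilon> \<delta> A out" and alg: "batched_alg n T A out"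
    and "\<sigma> > 0" and "\<epsilon> > 0" and "0 < \<delta>" and "\<delta> \<le> 1/6"
    and "\<forall>j<n. \<mu> j \<in> {0..1}" and "i < n" and "mu_top n \<mu> + \<epsilon> \<le> 1"
    and budget: "K * (mu_top n \<mu> - \<mu> i + \<epsilon>)\<^sup>2 / \<sigma>\<^sup>2 \<le> 2/3 * ln (1 / (2 * \<delta>))"
  shows "measure (gauss_bandit \<sigma> \<mu>) {X. cumN A T X i \<le> K \<and> out X \<noteq> i} \<le> 2/3"
proof (rule ccontr)
  define d where "d = mu_top n \<mu> - \<mu> i + \<epsilon>"
  assume "\<not> ?thesis"
  then have "\<delta> < measure (gauss_bandit \<sigma> (\<mu>(i := \<mu> i + d))) {X. cumN A T X i \<le> K \<and> out X \<noteq> i}"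
    using budget unfolding d_def[symmetric]
    by (intro measure_gauss_bandit_shift_gt[OF assms(3,5,6) sets_few_pulls[OF alg]
        shift_tail_preimage_few_pulls[OF alg]]) auto
  moreover have "\<mu>(i := \<mu> i + d) = \<mu>(i := mu_top n \<mu> + \<epsilon>)"
    by (simp add: d_def)
  ultimately show False
    using PAC_gauss_raised_arm[OF PAC alg assms(3,4,7,8,9), of "{X. cumN A T X i \<le> K \<and> out X \<noteq> i}"] by auto
qed

lemma exists_pull_budget:
  fixes c \<sigma> d :: real
  assumes "c > 0" and "\<sigma> > 0" and "d > 0"
  obtains K :: nat where "K * d\<^sup>2 / \<sigma>\<^sup>2 \<le> c" and "\<And>N :: nat. real N < c * (d / \<sigma>) powi (-2) \<longleftrightarrow> N \<le> K"
proof -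
  define \<theta> where "\<theta> = c * (d / \<sigma>) powi (-2)"
  have \<theta>: "\<theta> = c * \<sigma>\<^sup>2 / d\<^sup>2" and "\<theta> > 0"
    using assms by (simp_all add: \<theta>_def power_int_minus field_simps)
  define K where "K = nat \<lceil>\<theta>\<rceil> - 1"
  have K: "real N < \<theta> \<longleftrightarrow> N \<le> K" for N
    unfolding K_def using \<open>\<theta> > 0\<close> by linarith
  have "K * d\<^sup>2 / \<sigma>\<^sup>2 \<le> c"
    using K[of K] \<theta> assms by (simp add: field_simps)
  with K show ?thesis
    by (intro that) (simp_all add: \<theta>_def)
qed

lemma (in prob_space) prob_ge_of_compl_Un:
  assumes "{x \<in> space M. \<not> P x} = A \<union> B" and "A \<in> events" and "B \<in> events"
  shows "1 - prob A - prob B \<le> prob {x \<in> space M. P x}"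
proof -
  have "{x \<in> space M. P x} = space M - (A \<union> B)"
    using assms(1) by blast
  then have "prob {x \<in> space M. P x} = 1 - prob (A \<union> B)"
    using assms(2,3) by (simp add: prob_compl)
  then show ?thesis
    using measure_Un_le[OF assms(2,3)] by simp
qed

theorem mainTheorem12:
  fixes n T :: nat and \<sigma> \<epsilon> \<delta> :: real
    and A :: allocation and out :: "sample_table \<Rightarrow> nat" and \<mu> :: "nat \<Rightarrow> real" and i :: nat
  assumes "\<sigma> > 0" and "\<epsilon> > 0" and "0 < \<delta>" and "\<delta> \<le> 1/6"
    and "batched_alg n T A out"
    and "PAC_gauss n \<sigma> \<epsilon> \<delta> A out"
    and "\<forall>j<n. \<mu> j \<in> {0..1}"
    and "mu_top n \<mu> \<le> 1 - \<epsilon>"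
    and "gap n \<mu> (best_arm n \<mu>) \<ge> \<epsilon>"
    and "i < n" and "i \<noteq> best_arm n \<mu>"
  shows "measure (gauss_bandit \<sigma> \<mu>)
           {X \<in> space (gauss_bandit \<sigma> \<mu>).
              real (cumN A T X i) \<ge> (2/3 * ln (1 / (2 * \<delta>))) * ((gap n \<mu> i + \<epsilon>) / \<sigma>) powi (-2)}
         \<ge> 1/6"
proof -
  let ?\<nu> = "gauss_bandit \<sigma> \<mu>"
  interpret prob_space ?\<nu>
    using assms(1) by (rule prob_space_gauss_bandit)
  have \<mu>_i: "\<mu> i \<le> mu_top n \<mu> - \<epsilon>"
    using mu_le_mu_top_minus_gap[OF assms(10,11)] assms(9) by simp
  have gap_i: "gap n \<mu> i = mu_top n \<mu> - \<mu> i"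
    using assms(11) by (simp add: gap_def)
  have c_pos: "2/3 * ln (1 / (2 * \<delta>)) > 0"
    using assms(3,4) by (simp add: ln_gt_zero field_simps)
  have "gap n \<mu> i + \<epsilon> > 0"
    using gap_i \<mu>_i assms(2) by simp
  then obtain K where budget: "K * (gap n \<mu> i + \<epsilon>)\<^sup>2 / \<sigma>\<^sup>2 \<le> 2/3 * ln (1 / (2 * \<delta>))"
    and K: "\<And>N :: nat. real N < (2/3 * ln (1 / (2 * \<delta>))) * ((gap n \<mu> i + \<epsilon>) / \<sigma>) powi (-2) \<longleftrightarrow> N \<le> K"
    using exists_pull_budget[OF c_pos assms(1)] by blast
  let ?few = "\<lambda>P. {X. cumN A T X i \<le> K \<and> P (out X)}"
  have "measure ?\<nu> (?few (\<lambda>j. j \<noteq> i)) \<le> 2/3"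
    using budget gap_i assms(8)
    by (intro prob_few_pulls_wrong_output_le[OF assms(6,5,1,2,3,4,7,10)]) simp_all
  moreover have "measure ?\<nu> (?few (\<lambda>j. j = i)) \<le> \<delta>"
    using \<mu>_i by (intro PAC_gauss_bad_output_le[OF assms(6,5,1,7)]) auto
  moreover have "1 - measure ?\<nu> (?few (\<lambda>j. j \<noteq> i)) - measure ?\<nu> (?few (\<lambda>j. j = i))
      \<le> measure ?\<nu> {X \<in> space ?\<nu>. real (cumN A T X i) \<ge> (2/3 * ln (1 / (2 * \<delta>))) * ((gap n \<mu> i + \<epsilon>) / \<sigma>) powi (-2)}"
    using sets_few_pulls[OF assms(5)] K
    by (intro prob_ge_of_compl_Un) (auto simp: sets_gauss_bandit not_le)
  ultimately show ?thesis
    using assms(4) by simp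
qed

end
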